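(* Let $f,w\colon\mathbb{R}^d\to[0,\infty)$ be two proper log-concave functions such that the support of $w$ is bounded. Then for every $\xi\in(0,\|f\|_\infty)$ there is a positive position $g$ of $w$ with $g\le f$ and $\|g\|_\infty=\xi$.
   Context: A function $\mathbb{R}^d\to[0,\infty)$ is proper log-concave if it is upper semi-continuous, log-concave, with finite positive integral. The positive positions of $w$ are the functions $x\mapsto\alpha\,w(Ax+a)$ with $A$ a positive definite $d\times d$ matrix, $\alpha>0$, $a\in\mathbb{R}^d$. $g\le f$ means pointwise inequality; $\|\cdot\|_\infty$ is the supremum norm. *)

theory Defs
  imports "HOL-Analysis.Analysis"
begin

definition upper_semicont :: "('a::topological_space \<Rightarrow> real) \<Rightarrow> bool" where
  "upper_semicont f \<longleftrightarrow> (\<forall>x. \<forall>e>0. \<forall>\<^sub>F y in at x. f y < f x + e)"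

definition log_concave :: "('a::real_vector \<Rightarrow> real) \<Rightarrow> bool" where
  "log_concave f \<longleftrightarrow> (\<forall>x y. \<forall>t::real. 0 < t \<and> t < 1 \<longrightarrow>
       f ((1 - t) *\<^sub>R x + t *\<^sub>R y) \<ge> f x powr (1 - t) * f y powr t)"

definition proper_log_concave :: "(real^'n \<Rightarrow> real) \<Rightarrow> bool" where
  "proper_log_concave f \<longleftrightarrow> (\<forall>x. 0 \<le> f x) \<and> upper_semicont f \<and> log_concave f \<and>
       f integrable_on UNIV \<and> integral UNIV f > 0"

definition pos_def_matrix :: "real^'n^'n \<Rightarrow> bool" where
  "pos_def_matrix A \<longleftrightarrow> transpose A = A \<and> (\<forall>x. x \<noteq> 0 \<longrightarrow> x \<bullet> (A *v x) > 0)"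

definition positive_position :: "(real^'n \<Rightarrow> real) \<Rightarrow> (real^'n \<Rightarrow> real) \<Rightarrow> bool" where
  "positive_position w g \<longleftrightarrow> (\<exists>A \<alpha> a. pos_def_matrix A \<and> \<alpha> > 0 \<and>
       g = (\<lambda>x. \<alpha> * w (A *v x + a)))"

definition sup_norm :: "('a \<Rightarrow> real) \<Rightarrow> real" where
  "sup_norm f = (SUP x. \<bar>f x\<bar>)"

end

theory Submission
  imports Defs
begin

text \<open>
  Log-concavity and a positive integral force \<open>f \<ge> \<xi>\<close> on some ball \<open>B(p, \<rho>)\<close>: some superlevel
  set \<open>{f > c}\<close> with \<open>c > 0\<close> is convex and not null, hence contains a ball, and interpolating
  geometrically between that ball and a point where \<open>f > \<xi>\<close> gives \<open>B(p, \<rho>)\<close>.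
  Being upper semicontinuous with bounded support, \<open>w\<close> is bounded, so
  \<open>g x = (\<xi> / \<parallel>w\<parallel>\<^sub>\<infinity>) w (l (x - p))\<close> has sup norm \<open>\<xi>\<close>, and for \<open>l\<close> large its support lies
  in \<open>B(p, \<rho>)\<close>, where \<open>g \<le> \<xi> \<le> f\<close>.
\<close>

lemma less_sup_normD:
  assumes "\<xi> < sup_norm u"
  shows "\<exists>x. \<xi> < \<bar>u x\<bar>"
proof (cases "bdd_above (range (\<lambda>x. \<bar>u x\<bar>))")
  case True
  then show ?thesis using assms unfolding sup_norm_def by (simp add: less_cSUP_iff)
next
  case False
  then show ?thesis unfolding bdd_above_def by (auto simp: not_le)
qed

lemma abs_le_sup_norm:
  assumes "bdd_above (range (\<lambda>x. \<bar>u x\<bar>))"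
  shows "\<bar>u x\<bar> \<le> sup_norm u"
  unfolding sup_norm_def using assms by (rule cSUP_upper[OF UNIV_I])

lemma sup_norm_compose_surj:
  assumes "surj h"
  shows "sup_norm (\<lambda>x. u (h x)) = sup_norm u"
proof -
  have "range (\<lambda>x. \<bar>u (h x)\<bar>) = range (\<lambda>y. \<bar>u y\<bar>)"
    using assms by (metis image_image)
  then show ?thesis unfolding sup_norm_def by simp
qed

lemma sup_norm_cmult:
  assumes c: "0 \<le> c" and bdd: "bdd_above (range (\<lambda>x. \<bar>u x\<bar>))"
  shows "sup_norm (\<lambda>x. c * u x) = c * sup_norm u"
proof (cases "c = 0")
  case False
  then have c: "0 < c" using c by simp
  obtain B where "\<And>x. \<bar>u x\<bar> \<le> B" using bdd by (auto simp: bdd_above_def)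
  then have bdd_c: "bdd_above (range (\<lambda>x. c * \<bar>u x\<bar>))"
    using c by (intro bdd_aboveI[of _ "c * B"]) (auto intro: mult_left_mono)
  have "(SUP x. c * \<bar>u x\<bar>) = c * (SUP x. \<bar>u x\<bar>)"
  proof (rule antisym)
    show "(SUP x. c * \<bar>u x\<bar>) \<le> c * (SUP x. \<bar>u x\<bar>)"
      using bdd c by (intro cSUP_least mult_left_mono cSUP_upper) auto
    have "(SUP x. \<bar>u x\<bar>) \<le> (SUP x. c * \<bar>u x\<bar>) / c"
    proof (rule cSUP_least)
      fix x
      have "c * \<bar>u x\<bar> \<le> (SUP x. c * \<bar>u x\<bar>)" using bdd_c by (rule cSUP_upper[OF UNIV_I])
      then show "\<bar>u x\<bar> \<le> (SUP x. c * \<bar>u x\<bar>) / c" using c by (simp add: field_simps)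
    qed simp
    then show "c * (SUP x. \<bar>u x\<bar>) \<le> (SUP x. c * \<bar>u x\<bar>)" using c by (simp add: field_simps)
  qed
  then show ?thesis unfolding sup_norm_def using c by (simp add: abs_mult)
qed (simp add: sup_norm_def)

lemma upper_semicont_bounded_support_imp_bdd_above:
  fixes w :: "'a::heine_borel \<Rightarrow> real"
  assumes usc: "upper_semicont w" and bd: "bounded {x. w x \<noteq> 0}"
  shows "bdd_above (range w)"
proof -
  let ?K = "closure {x. w x \<noteq> 0}"
  have "\<forall>x. \<exists>U. open U \<and> x \<in> U \<and> (\<forall>y\<in>U. w y \<le> \<bar>w x\<bar> + 1)"
  proof
    fix x
    have "\<forall>\<^sub>F y in at x. w y < w x + 1" using usc unfolding upper_semicont_def by simp
    then obtain U where U: "open U" "x \<in> U" "\<forall>y\<in>U. y \<noteq> x \<longrightarrow> w y < w x + 1"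
      unfolding eventually_at_topological by blast
    have "w y \<le> \<bar>w x\<bar> + 1" if "y \<in> U" for y
      using U(3) that by (cases "y = x") auto
    with U(1,2) show "\<exists>U. open U \<and> x \<in> U \<and> (\<forall>y\<in>U. w y \<le> \<bar>w x\<bar> + 1)" by blast
  qed
  then obtain U where U: "\<And>x. open (U x)" "\<And>x. x \<in> U x" "\<And>x y. y \<in> U x \<Longrightarrow> w y \<le> \<bar>w x\<bar> + 1"
    by (metis choice)
  have "compact ?K" using bd by (simp add: compact_closure)
  moreover have "?K \<subseteq> (\<Union>x\<in>?K. U x)" using U(2) by blast
  ultimately obtain C where C: "finite C" "?K \<subseteq> (\<Union>x\<in>C. U x)"
    by (metis compactE_image U(1))
  define B where "B = (\<Sum>x\<in>C. \<bar>w x\<bar> + 1)"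
  have "w y \<le> B" for y
  proof (cases "y \<in> ?K")
    case True
    then obtain x where x: "x \<in> C" "y \<in> U x" using C(2) by blast
    have "w y \<le> \<bar>w x\<bar> + 1" using U(3)[OF x(2)] .
    also have "\<dots> \<le> B" unfolding B_def using x C by (intro member_le_sum) auto
    finally show ?thesis .
  next
    case False
    then have "w y = 0" by (metis (mono_tags, lifting) closure_subset mem_Collect_eq subsetD)
    moreover have "0 \<le> B" unfolding B_def by (intro sum_nonneg) auto
    ultimately show ?thesis by simp
  qed
  then show ?thesis by (intro bdd_aboveI) blast
qed

lemma convex_superlevel_log_concave:
  fixes f :: "'a::real_vector \<Rightarrow> real"
  assumes lc: "log_concave f" and c: "0 \<le> c"
  shows "convex {x. c < f x}"
proof (rule convexI)
  fix x y and u v :: real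
  assume x: "x \<in> {x. c < f x}" and y: "y \<in> {x. c < f x}"
    and u: "0 \<le> u" and v: "0 \<le> v" and uv: "u + v = 1"
  show "u *\<^sub>R x + v *\<^sub>R y \<in> {x. c < f x}"
  proof (cases "v = 0 \<or> v = 1")
    case True
    then show ?thesis using x y uv by auto
  next
    case False
    then have v01: "0 < v" "v < 1" and u1: "u = 1 - v" using v uv u by auto
    have "c = c powr (1 - v) * c powr v"
      using c by (cases "c = 0") (simp_all add: powr_add[symmetric])
    also have "\<dots> < f x powr (1 - v) * f y powr v"
    proof (cases "c = 0")
      case False
      then show ?thesis using x y v01 c by (intro mult_strict_mono powr_less_mono2) auto
    qed (use x y in simp)
    also have "\<dots> \<le> f (u *\<^sub>R x + v *\<^sub>R y)"
      using lc v01 unfolding log_concave_def u1 by blast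
    finally show ?thesis by simp
  qed
qed

lemma log_concave_bounded_below_on_ball:
  fixes f :: "'a::euclidean_space \<Rightarrow> real"
  assumes nn: "\<And>x. 0 \<le> f x" and lc: "log_concave f" and int: "0 < integral UNIV f"
  shows "\<exists>c y r. 0 < c \<and> 0 < r \<and> (\<forall>z\<in>ball y r. c < f z)"
proof (rule ccontr)
  assume no_ball: "\<not> ?thesis"
  define S where "S n = {x. 1 / real (Suc n) < f x}" for n
  have "negligible (S n)" for n
  proof -
    have "interior (S n) = {}"
    proof (rule ccontr)
      assume "interior (S n) \<noteq> {}"
      then obtain y where "y \<in> interior (S n)" by blast
      then obtain r where "0 < r" "ball y r \<subseteq> S n" using mem_interior by blast
      then have "\<forall>z\<in>ball y r. 1 / real (Suc n) < f z" unfolding S_def by blast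
      moreover have "0 < 1 / real (Suc n)" by simp
      ultimately show False using no_ball \<open>0 < r\<close> by blast
    qed
    moreover have "convex (S n)" unfolding S_def by (rule convex_superlevel_log_concave[OF lc]) simp
    ultimately show ?thesis using negligible_convex_interior by blast
  qed
  then have null: "negligible (\<Union>n. S n)" by (rule negligible_Union_nat)
  have "f x = 0" if "x \<notin> (\<Union>n. S n)" for x
  proof (rule ccontr)
    assume "f x \<noteq> 0"
    then have "0 < f x" using nn[of x] by simp
    then obtain n where "inverse (real (Suc n)) < f x" using reals_Archimedean by blast
    then show False using that unfolding S_def by (simp add: inverse_eq_divide)
  qed
  then have "(f has_integral 0) UNIV" by (intro has_integral_negligible[OF null]) auto
  then show False using int by (simp add: integral_unique)
qed

lemma geometric_interpolation_exists:
  fixes a c \<xi> :: real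
  assumes "0 < c" "c < \<xi>" "\<xi> < a"
  shows "\<exists>t. 0 < t \<and> t < 1 \<and> a powr (1 - t) * c powr t = \<xi>"
proof -
  have l: "ln c < ln \<xi>" "ln \<xi> < ln a" using assms by auto
  define t where "t = (ln a - ln \<xi>) / (ln a - ln c)"
  have "(1 - t) * ln a + t * ln c = ln a - t * (ln a - ln c)" by algebra
  also have "\<dots> = ln \<xi>" unfolding t_def using l by simp
  finally have "(1 - t) * ln a + t * ln c = ln \<xi>" .
  then have "a powr (1 - t) * c powr t = \<xi>"
    using assms by (simp add: powr_def exp_add[symmetric])
  moreover have "0 < t" "t < 1" using l unfolding t_def by (auto simp: field_simps)
  ultimately show ?thesis by blast
qed

lemma log_concave_lower_bound_on_ball:
  fixes f :: "'a::real_normed_vector \<Rightarrow> real"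
  assumes lc: "log_concave f" and t: "0 < t" "t < 1"
    and c: "0 \<le> c" and ball: "\<forall>z\<in>ball y r. c \<le> f z"
    and z': "z' \<in> ball ((1 - t) *\<^sub>R x + t *\<^sub>R y) (t * r)"
  shows "f x powr (1 - t) * c powr t \<le> f z'"
proof -
  define z where "z = (1 / t) *\<^sub>R (z' - (1 - t) *\<^sub>R x)"
  have z'_eq: "z' = (1 - t) *\<^sub>R x + t *\<^sub>R z" using t unfolding z_def by (simp add: algebra_simps)
  have "y - z = (1 / t) *\<^sub>R ((1 - t) *\<^sub>R x + t *\<^sub>R y - z')"
    using t unfolding z_def by (simp add: algebra_simps)
  then have "dist y z = dist ((1 - t) *\<^sub>R x + t *\<^sub>R y) z' / t" using t by (simp add: dist_norm)
  also have "\<dots> < r" using z' t by (simp add: field_simps)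
  finally have "c \<le> f z" using ball by simp
  then have "f x powr (1 - t) * c powr t \<le> f x powr (1 - t) * f z powr t"
    using c t by (intro mult_left_mono powr_mono2) auto
  also have "\<dots> \<le> f z'" using lc t unfolding log_concave_def z'_eq by blast
  finally show ?thesis .
qed

lemma log_concave_ge_on_ball:
  fixes f :: "'a::euclidean_space \<Rightarrow> real"
  assumes nn: "\<And>x. 0 \<le> f x" and lc: "log_concave f" and int: "0 < integral UNIV f"
    and \<xi>: "0 < \<xi>" "\<xi> < f x"
  shows "\<exists>p \<rho>. 0 < \<rho> \<and> (\<forall>z\<in>ball p \<rho>. \<xi> \<le> f z)"
proof -
  obtain c y r where "0 < c" "0 < r" and ball: "\<forall>z\<in>ball y r. c < f z"
    using log_concave_bounded_below_on_ball[OF nn lc int] by blast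
  define c' where "c' = min c (\<xi> / 2)"
  have c': "0 < c'" "c' < \<xi>" "\<forall>z\<in>ball y r. c' \<le> f z"
    using \<open>0 < c\<close> \<xi> ball unfolding c'_def by force+
  obtain t where t: "0 < t" "t < 1" and "f x powr (1 - t) * c' powr t = \<xi>"
    using geometric_interpolation_exists[OF c'(1,2) \<xi>(2)] by blast
  then have "\<forall>z\<in>ball ((1 - t) *\<^sub>R x + t *\<^sub>R y) (t * r). \<xi> \<le> f z"
    using log_concave_lower_bound_on_ball[OF lc t _ c'(3)] c'(1) by auto
  then show ?thesis using t \<open>0 < r\<close> by (metis mult_pos_pos)
qed

lemma mat_mulv_eq_scaleR: "(mat l :: real^'n^'n) *v x = l *\<^sub>R x"
  by (metis linear_scaleR matrix_scaleR matrix_vector_mul)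

lemma pos_def_matrix_mat: "0 < l \<Longrightarrow> pos_def_matrix (mat l :: real^'n^'n)"
  unfolding pos_def_matrix_def mat_mulv_eq_scaleR by simp

lemma positive_position_dilate:
  fixes w :: "real^'n \<Rightarrow> real"
  assumes "0 < \<alpha>" "0 < l"
  shows "positive_position w (\<lambda>x. \<alpha> * w (l *\<^sub>R (x - p)))"
  unfolding positive_position_def
proof (intro exI conjI)
  show "pos_def_matrix (mat l :: real^'n^'n)" using assms(2) by (rule pos_def_matrix_mat)
  show "(\<lambda>x. \<alpha> * w (l *\<^sub>R (x - p))) = (\<lambda>x. \<alpha> * w (mat l *v x + - (l *\<^sub>R p)))"
    by (simp add: mat_mulv_eq_scaleR algebra_simps)
qed (rule assms(1))

lemma sup_norm_dilate:
  fixes w :: "'a::real_vector \<Rightarrow> real"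
  assumes "0 \<le> \<alpha>" "l \<noteq> 0" and bdd: "bdd_above (range (\<lambda>x. \<bar>w x\<bar>))"
  shows "sup_norm (\<lambda>x. \<alpha> * w (l *\<^sub>R (x - p))) = \<alpha> * sup_norm w"
proof -
  have "surj (\<lambda>x. l *\<^sub>R (x - p))"
    using assms(2) by (intro surjI[of _ "\<lambda>v. p + (1 / l) *\<^sub>R v"]) simp
  then have "sup_norm (\<lambda>x. w (l *\<^sub>R (x - p))) = sup_norm w" by (rule sup_norm_compose_surj)
  moreover have "bdd_above (range (\<lambda>x. \<bar>w (l *\<^sub>R (x - p))\<bar>))"
    using bdd by (rule bdd_above_mono) auto
  then have "sup_norm (\<lambda>x. \<alpha> * w (l *\<^sub>R (x - p))) = \<alpha> * sup_norm (\<lambda>x. w (l *\<^sub>R (x - p)))"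
    by (rule sup_norm_cmult[OF assms(1)])
  ultimately show ?thesis by simp
qed

lemma sup_norm_pos:
  assumes "bdd_above (range (\<lambda>x. \<bar>u x\<bar>))" "u x \<noteq> 0"
  shows "0 < sup_norm u"
  using abs_le_sup_norm[OF assms(1), of x] assms(2) by simp

lemma dilate_le_on_ball:
  fixes f w :: "'a::real_normed_vector \<Rightarrow> real"
  assumes supp: "{x. w x \<noteq> 0} \<subseteq> ball 0 R" and "0 < R" "0 < \<rho>"
    and le_\<xi>: "\<And>x. \<alpha> * w x \<le> \<xi>" and f_ge: "\<forall>z\<in>ball p \<rho>. \<xi> \<le> f z" and f_nn: "0 \<le> f x"
  shows "\<alpha> * w ((R / \<rho>) *\<^sub>R (x - p)) \<le> f x"
proof (cases "w ((R / \<rho>) *\<^sub>R (x - p)) = 0")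
  case False
  then have "R / \<rho> * norm (x - p) < R" using supp \<open>0 < R\<close> \<open>0 < \<rho>\<close> by auto
  then have "x \<in> ball p \<rho>" using \<open>0 < R\<close> \<open>0 < \<rho>\<close>
    by (simp add: field_simps dist_norm norm_minus_commute)
  then show ?thesis using le_\<xi> f_ge by (meson order_trans)
qed (simp add: f_nn)

theorem lemmaA3:
  fixes f w :: "real^'n \<Rightarrow> real"
  assumes "proper_log_concave f" and "proper_log_concave w"
    and "bounded {x. w x \<noteq> 0}"
    and "0 < \<xi>" and "\<xi> < sup_norm f"
  shows "\<exists>g. positive_position w g \<and> (\<forall>x. g x \<le> f x) \<and> sup_norm g = \<xi>"
proof -
  have f: "\<And>x. 0 \<le> f x" "log_concave f" "0 < integral UNIV f"
    and w: "\<And>x. 0 \<le> w x" "upper_semicont w" "0 < integral UNIV w"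
    using assms(1,2) unfolding proper_log_concave_def by auto
  obtain x0 where "\<xi> < f x0" using less_sup_normD[OF assms(5)] f(1) by (metis abs_of_nonneg)
  then obtain p \<rho> where "0 < \<rho>" and f_ge: "\<forall>z\<in>ball p \<rho>. \<xi> \<le> f z"
    using log_concave_ge_on_ball[OF f assms(4)] by blast
  obtain R where "0 < R" and supp: "{x. w x \<noteq> 0} \<subseteq> ball 0 R"
    using bounded_subset_ballD[OF assms(3)] by blast
  have bdd: "bdd_above (range (\<lambda>x. \<bar>w x\<bar>))"
    using upper_semicont_bounded_support_imp_bdd_above[OF w(2) assms(3)] w(1) by simp
  have "w \<noteq> (\<lambda>x. 0)" using w(3) by auto
  then obtain x1 where "w x1 \<noteq> 0" by auto
  then have M: "0 < sup_norm w" by (rule sup_norm_pos[OF bdd])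
  define g where "g x = (\<xi> / sup_norm w) * w ((R / \<rho>) *\<^sub>R (x - p))" for x
  have "(\<xi> / sup_norm w) * w x \<le> \<xi>" for x
    using abs_le_sup_norm[OF bdd, of x] w(1)[of x] M assms(4) by (simp add: field_simps)
  then have "g x \<le> f x" for x
    unfolding g_def using dilate_le_on_ball[OF supp \<open>0 < R\<close> \<open>0 < \<rho>\<close> _ f_ge f(1)] by blast
  moreover have "sup_norm g = (\<xi> / sup_norm w) * sup_norm w"
    unfolding g_def using assms(4) M \<open>0 < R\<close> \<open>0 < \<rho>\<close> by (intro sup_norm_dilate[OF _ _ bdd]) auto
  then have "sup_norm g = \<xi>" using M by simp
  moreover have "positive_position w g"
    unfolding g_def using assms(4) M \<open>0 < R\<close> \<open>0 < \<rho>\<close> by (intro positive_position_dilate) auto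
  ultimately show ?thesis by blast
qed

end
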